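(* Let $(X,\mathcal{B})$ be a partial STS$(v)$ with $v>5$ and $\mathcal{B}\neq\emptyset$. Consider the following procedure: (1) choose a block $\{b,c,e\}\in\mathcal{B}$, a point $a\notin\{b,c,e\}$, and a point $d\notin\{a,b,c,e\}$; (2) set $x_1=a$, $x_2=b$, $x_3=c$, $x_4=d$, $x_5=e$; (3) for $i=6,\dots,v-1$ in turn, let $x_i$ be any point of $X$ distinct from $x_1,\dots,x_{i-1}$ and distinct from $\mathrm{third}(x_{i-2},x_{i-1})$ (if the latter is defined); (4) let $x_v$ be the unique point distinct from $x_1,\dots,x_{v-1}$; (5) if $\{x_{v-2},x_{v-1},x_v\}\in\mathcal{B}$, interchange $x_1$ and $x_v$; (6) output $\pi=[x_1\,x_2\,\cdots\,x_v]$. Then for every possible sequence of choices, step (3) can always be carried out, and the output $\pi$ is a $3$-good sequencing for $(X,\mathcal{B})$.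
   Context: A partial Steiner triple system of order $v$, PSTS$(v)$, is a pair $(X,\mathcal{B})$ where $X$ is a set of $v$ points and $\mathcal{B}$ is a set of 3-subsets of $X$ (blocks) such that every pair of distinct points lies in at most one block. For distinct points $x,y$ lying in a common block, $\mathrm{third}(x,y)$ denotes the unique $z$ with $\{x,y,z\}\in\mathcal{B}$; if $x,y$ lie in no block, $\mathrm{third}(x,y)$ is undefined and imposes no restriction. A sequencing of $X$ is an ordering of all points of $X$, each exactly once; it is $3$-good if no three consecutive points form a block. *)

theory Defs
  imports Main
begin

definition psts :: "'a set \<Rightarrow> 'a set set \<Rightarrow> bool" where
  "psts X B \<longleftrightarrow> finite X \<and> (\<forall>b\<in>B. b \<subseteq> X \<and> card b = 3) \<and>
     (\<forall>x y b1 b2. x \<noteq> y \<and> b1 \<in> B \<and> b2 \<in> B \<and> x \<in> b1 \<and> y \<in> b1 \<and> x \<in> b2 \<and> y \<in> b2 \<longrightarrow> b1 = b2)"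

definition third_defined :: "'a set set \<Rightarrow> 'a \<Rightarrow> 'a \<Rightarrow> bool" where
  "third_defined B x y \<longleftrightarrow> x \<noteq> y \<and> (\<exists>b\<in>B. x \<in> b \<and> y \<in> b)"

definition third :: "'a set set \<Rightarrow> 'a \<Rightarrow> 'a \<Rightarrow> 'a" where
  "third B x y = (THE z. {x, y, z} \<in> B)"

definition avoids_third :: "'a set set \<Rightarrow> 'a \<Rightarrow> 'a \<Rightarrow> 'a \<Rightarrow> bool" where
  "avoids_third B p q y \<longleftrightarrow> (third_defined B p q \<longrightarrow> y \<noteq> third B p q)"

text \<open>A list [x_1,...,x_k] (0-indexed) that can arise from steps (1)-(3) of the procedure.\<close>
definition valid_prefix :: "'a set \<Rightarrow> 'a set set \<Rightarrow> 'a list \<Rightarrow> bool" where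
  "valid_prefix X B xs \<longleftrightarrow> distinct xs \<and> set xs \<subseteq> X \<and> 5 \<le> length xs \<and>
     {xs ! 1, xs ! 2, xs ! 4} \<in> B \<and>
     (\<forall>j. 5 \<le> j \<and> j < length xs \<longrightarrow> avoids_third B (xs ! (j - 2)) (xs ! (j - 1)) (xs ! j))"

definition final_output :: "'a set set \<Rightarrow> 'a list \<Rightarrow> 'a \<Rightarrow> 'a list" where
  "final_output B xs y = (let ys = xs @ [y]; v = length ys in
     if {ys ! (v - 3), ys ! (v - 2), ys ! (v - 1)} \<in> B
     then ys[0 := ys ! (v - 1), v - 1 := ys ! 0] else ys)"

definition three_good :: "'a set \<Rightarrow> 'a set set \<Rightarrow> 'a list \<Rightarrow> bool" where
  "three_good X B pi \<longleftrightarrow> distinct pi \<and> set pi = X \<and>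
     (\<forall>j. j + 2 < length pi \<longrightarrow> {pi ! j, pi ! (j + 1), pi ! (j + 2)} \<notin> B)"

end

theory Submission
  imports Defs
begin

text \<open>No three consecutive points of the prefix x1 ... x(v-1) form a block: from x6 on this is
  the rule of step (3), and among x1 ... x5 each consecutive triple shares two points with the block
  {x2, x3, x5} without being equal to it, which is impossible as two blocks meet in at most one
  point. Hence after appending xv only the final triple can be a block. If it is, swapping x1 and xv
  destroys it (it would become a second block through x(v-2), x(v-1)), and the new first triple
  {xv, x2, x3} cannot be a block since its third point would have to be x5.\<close>

lemma psts_finite: "psts X B \<Longrightarrow> finite X"
  unfolding psts_def by (elim conjE)

lemma psts_block_distinct:
  assumes "psts X B" "{p, q, r} \<in> B"
  shows "p \<noteq> q" "q \<noteq> r" "p \<noteq> r"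
proof -
  have "card {p, q, r} = 3" using assms unfolding psts_def by blast
  then show "p \<noteq> q" "q \<noteq> r" "p \<noteq> r" by (auto simp: card_insert_if split: if_splits)
qed

lemma psts_block_unique:
  assumes "psts X B" "b1 \<in> B" "b2 \<in> B" "p \<noteq> q" "p \<in> b1" "q \<in> b1" "p \<in> b2" "q \<in> b2"
  shows "b1 = b2"
proof -
  have "\<forall>x y b1 b2. x \<noteq> y \<and> b1 \<in> B \<and> b2 \<in> B \<and> x \<in> b1 \<and> y \<in> b1 \<and> x \<in> b2 \<and> y \<in> b2 \<longrightarrow> b1 = b2"
    using assms(1) unfolding psts_def by (elim conjE)
  then show ?thesis using assms(2-) by blast
qed

lemma psts_third_unique:
  assumes P: "psts X B" and r: "{p, q, r} \<in> B" and s: "{p, q, s} \<in> B"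
  shows "r = s"
proof -
  have "{p, q, r} = {p, q, s}"
    using psts_block_unique[OF P r s psts_block_distinct(1)[OF P r]] by simp
  then have "r \<in> {p, q, s}" by (metis insertI1 insertI2)
  then show ?thesis using psts_block_distinct[OF P r] by auto
qed

lemma third_of_block:
  assumes P: "psts X B" and b: "{p, q, r} \<in> B"
  shows "third_defined B p q" "third B p q = r"
proof -
  show "third_defined B p q"
    using b psts_block_distinct(1)[OF P b] unfolding third_defined_def by blast
  show "third B p q = r"
    unfolding third_def
  proof (rule the_equality)
    show "{p, q, r} \<in> B" by (fact b)
    show "z = r" if "{p, q, z} \<in> B" for z using psts_third_unique[OF P b that] by simp
  qed
qed

lemma avoids_third_not_block:
  assumes P: "psts X B" and "avoids_third B p q r"
  shows "{p, q, r} \<notin> B"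
proof
  assume "{p, q, r} \<in> B"
  from third_of_block[OF P this] show False
    using \<open>avoids_third B p q r\<close> unfolding avoids_third_def by simp
qed

lemma valid_prefix_no_block_start:
  assumes P: "psts X B" and V: "valid_prefix X B xs" and j: "j < 3"
  shows "{xs ! j, xs ! (j + 1), xs ! (j + 2)} \<notin> B"
proof
  assume T: "{xs ! j, xs ! (j + 1), xs ! (j + 2)} \<in> B"
  have D: "distinct xs" and L: "5 \<le> length xs" and E: "{xs ! 1, xs ! 2, xs ! 4} \<in> B"
    using V unfolding valid_prefix_def by auto
  have neq: "xs ! i \<noteq> xs ! k" if "i < 5" "k < 5" "i \<noteq> k" for i k
    using D L that nth_eq_iff_index_eq by fastforce
  consider "j = 0" | "j = 1" | "j = 2" using j by linarith
  then show False
  proof cases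
    case 1
    then have "{xs ! 1, xs ! 2, xs ! 0} \<in> B" using T by (simp add: insert_commute numeral_2_eq_2)
    then have "xs ! 0 = xs ! 4" by (rule psts_third_unique[OF P _ E])
    then show False using neq[of 0 4] by simp
  next
    case 2
    then have "{xs ! 1, xs ! 2, xs ! 3} \<in> B" using T by (simp add: numeral_eq_Suc)
    then have "xs ! 3 = xs ! 4" by (rule psts_third_unique[OF P _ E])
    then show False using neq[of 3 4] by simp
  next
    case 3
    then have "{xs ! 2, xs ! 4, xs ! 3} \<in> B" using T by (simp add: insert_commute)
    moreover have "{xs ! 2, xs ! 4, xs ! 1} \<in> B" using E by (simp add: insert_commute)
    ultimately have "xs ! 3 = xs ! 1" by (rule psts_third_unique[OF P])
    then show False using neq[of 3 1] by simp
  qed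
qed

lemma valid_prefix_no_block:
  assumes P: "psts X B" and V: "valid_prefix X B xs" and j: "j + 2 < length xs"
  shows "{xs ! j, xs ! (j + 1), xs ! (j + 2)} \<notin> B"
proof (cases "j < 3")
  case True
  then show ?thesis by (rule valid_prefix_no_block_start[OF P V])
next
  case False
  then have "avoids_third B (xs ! j) (xs ! (j + 1)) (xs ! (j + 2))"
    using V j unfolding valid_prefix_def
    by (auto dest!: spec[of _ "j + 2"] simp: numeral_eq_Suc)
  then show ?thesis by (rule avoids_third_not_block[OF P])
qed

lemma exists_point_outside_avoiding:
  assumes "finite X" "A \<subseteq> X" "card A + 1 < card X"
  shows "\<exists>y\<in>X. y \<notin> A \<and> y \<noteq> z"
proof (rule ccontr)
  assume "\<not> ?thesis"
  then have "X \<subseteq> insert z A" by blast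
  have "finite A" using assms finite_subset by blast
  have "card X \<le> card (insert z A)"
    using \<open>X \<subseteq> insert z A\<close> \<open>finite A\<close> by (intro card_mono) auto
  also have "\<dots> \<le> card A + 1" using \<open>finite A\<close> by (simp add: card_insert_if)
  finally show False using assms by linarith
qed

lemma final_output_eq:
  assumes "2 \<le> length xs"
  shows "final_output B xs y =
    (if {xs ! (length xs - 2), xs ! (length xs - 1), y} \<in> B then y # tl xs @ [hd xs] else xs @ [y])"
proof -
  obtain x xt where xs: "xs = x # xt" using assms by (cases xs) auto
  have last_triple: "(xs @ [y]) ! (length xs + 1 - 3) = xs ! (length xs - 2)"
       "(xs @ [y]) ! (length xs + 1 - 2) = xs ! (length xs - 1)"
    using assms by (auto simp: nth_append)
  have "(xs @ [y]) ! 0 = hd xs" by (simp add: xs)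
  have "(xs @ [y])[0 := y, length xs := hd xs] = y # tl xs @ [hd xs]"
    by (simp add: xs list_update_append)
  then show ?thesis
    unfolding final_output_def Let_def using last_triple \<open>(xs @ [y]) ! 0 = hd xs\<close> by simp
qed

lemma nth_swap_ends:
  assumes "0 < i" "i < length xs"
  shows "(y # tl xs @ [z]) ! i = xs ! i"
  using assms by (cases xs) (auto simp: nth_append nth_Cons')

lemma append_fresh_enumerates:
  assumes "finite X" "set xs \<subseteq> X" "distinct xs" "y \<in> X" "y \<notin> set xs"
    and "length xs = card X - 1"
  shows "distinct (xs @ [y])" "set (xs @ [y]) = X"
proof -
  show "distinct (xs @ [y])" using assms by simp
  have "card X > 0" using assms card_gt_0_iff by blast
  then have "card (set (xs @ [y])) = card X"
    using assms distinct_card[OF \<open>distinct (xs @ [y])\<close>] by simp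
  then show "set (xs @ [y]) = X" using assms by (intro card_subset_eq) auto
qed

lemma three_good_append_last:
  assumes P: "psts X B" and V: "valid_prefix X B xs"
    and y: "y \<in> X" "y \<notin> set xs" and len: "length xs = card X - 1"
    and last: "{xs ! (length xs - 2), xs ! (length xs - 1), y} \<notin> B"
  shows "three_good X B (xs @ [y])"
  unfolding three_good_def
proof (intro conjI allI impI)
  have fin: "finite X" using psts_finite[OF P] .
  have S: "set xs \<subseteq> X" and D: "distinct xs" using V unfolding valid_prefix_def by auto
  show "distinct (xs @ [y])" "set (xs @ [y]) = X"
    using append_fresh_enumerates[OF fin S D y len] by auto
  fix j assume j: "j + 2 < length (xs @ [y])"
  show "{(xs @ [y]) ! j, (xs @ [y]) ! (j + 1), (xs @ [y]) ! (j + 2)} \<notin> B"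
  proof (cases "j + 2 < length xs")
    case True
    then show ?thesis using valid_prefix_no_block[OF P V] by (simp add: nth_append)
  next
    case False
    then have "j = length xs - 2" "j + 1 = length xs - 1" "j + 2 = length xs" using j by auto
    then show ?thesis using last j by (simp add: nth_append)
  qed
qed

lemma three_good_swap_ends:
  assumes P: "psts X B" and V: "valid_prefix X B xs"
    and y: "y \<in> X" "y \<notin> set xs" and len: "length xs = card X - 1"
    and last: "{xs ! (length xs - 2), xs ! (length xs - 1), y} \<in> B"
  shows "three_good X B (y # tl xs @ [hd xs])"
  unfolding three_good_def
proof (intro conjI allI impI)
  let ?zs = "y # tl xs @ [hd xs]"
  define n where "n = length xs"
  have fin: "finite X" using psts_finite[OF P] .
  have S: "set xs \<subseteq> X" and D: "distinct xs" and n5: "5 \<le> n"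
    and E: "{xs ! 1, xs ! 2, xs ! 4} \<in> B"
    using V unfolding valid_prefix_def n_def by auto
  obtain x xt where xs: "xs = x # xt" using n5 n_def by (cases xs) auto
  have "set ?zs = set (xs @ [y])" "distinct ?zs = distinct (xs @ [y])"
    using xs by auto
  then show "distinct ?zs" "set ?zs = X"
    using append_fresh_enumerates[OF fin S D y len] by simp_all
  have zs: "?zs ! i = xs ! i" if "0 < i" "i < n" for i
    using nth_swap_ends[of i xs y "hd xs"] that unfolding n_def by simp
  fix j assume j: "j + 2 < length ?zs"
  then have jn: "j + 2 \<le> n" using n5 n_def by auto
  show "{?zs ! j, ?zs ! (j + 1), ?zs ! (j + 2)} \<notin> B"
  proof
    assume T: "{?zs ! j, ?zs ! (j + 1), ?zs ! (j + 2)} \<in> B"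
    consider "j = 0" | "0 < j" "j + 2 < n" | "j + 2 = n" using jn by linarith
    then show False
    proof cases
      case 1
      then have "{xs ! 1, xs ! 2, y} \<in> B" using T zs[of 1] zs[of 2] n5 by (simp add: insert_commute)
      then have "y = xs ! 4" by (rule psts_third_unique[OF P _ E])
      then show False using y n5 n_def by simp
    next
      case 2
      then have "?zs ! j = xs ! j" "?zs ! (j + 1) = xs ! (j + 1)" "?zs ! (j + 2) = xs ! (j + 2)"
        by (intro zs; simp)+
      then have "{xs ! j, xs ! (j + 1), xs ! (j + 2)} \<in> B" using T by (simp only:)
      then show False using valid_prefix_no_block[OF P V] 2 n_def by simp
    next
      case 3
      have "?zs ! j = xs ! j" "?zs ! (j + 1) = xs ! (j + 1)" using 3 n5 by (intro zs; simp)+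
      moreover have "?zs ! (j + 2) = hd xs" using 3 by (simp add: xs n_def nth_append)
      ultimately have "{xs ! j, xs ! (j + 1), hd xs} \<in> B" using T by (simp only:)
      moreover have "length xs - 2 = j" "length xs - 1 = j + 1" using 3 n_def by auto
      then have "{xs ! j, xs ! (j + 1), y} \<in> B" using last by (simp only:)
      ultimately have "hd xs = y" by (rule psts_third_unique[OF P])
      then show False using y by (simp add: xs)
    qed
  qed
qed

lemma valid_prefix_extensible:
  assumes P: "psts X B" and V: "valid_prefix X B xs" and short: "length xs < card X - 1"
  shows "\<exists>y\<in>X. y \<notin> set xs \<and> avoids_third B p q y"
proof -
  have S: "set xs \<subseteq> X" and D: "distinct xs" using V unfolding valid_prefix_def by simp_all
  have "card (set xs) + 1 < card X" using short distinct_card[OF D] by linarith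
  then obtain y where "y \<in> X" "y \<notin> set xs" "y \<noteq> third B p q"
    using exists_point_outside_avoiding[OF psts_finite[OF P] S] by blast
  then show ?thesis unfolding avoids_third_def by blast
qed

lemma final_output_three_good:
  assumes P: "psts X B" and V: "valid_prefix X B xs"
    and y: "y \<in> X" "y \<notin> set xs" and len: "length xs = card X - 1"
  shows "three_good X B (final_output B xs y)"
proof -
  have "2 \<le> length xs" using V unfolding valid_prefix_def by simp
  note output_eq = final_output_eq[OF this, of B y]
  show ?thesis
  proof (cases "{xs ! (length xs - 2), xs ! (length xs - 1), y} \<in> B")
    case True
    then show ?thesis
      unfolding output_eq if_P[OF True] by (rule three_good_swap_ends[OF P V y len])
  next
    case False
    then show ?thesis
      unfolding output_eq if_not_P[OF False] by (rule three_good_append_last[OF P V y len])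
  qed
qed

theorem mainTheorem4:
  fixes X :: "'a set" and B :: "'a set set"
  assumes "psts X B" and "card X > 5" and "B \<noteq> {}"
  shows "(\<forall>xs. valid_prefix X B xs \<and> length xs < card X - 1 \<longrightarrow>
            (\<exists>y\<in>X. y \<notin> set xs \<and> avoids_third B (xs ! (length xs - 2)) (xs ! (length xs - 1)) y))
       \<and> (\<forall>xs y. valid_prefix X B xs \<and> length xs = card X - 1 \<and> y \<in> X \<and> y \<notin> set xs \<longrightarrow>
            three_good X B (final_output B xs y))"
  using valid_prefix_extensible[OF assms(1)] final_output_three_good[OF assms(1)] by blast

end
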